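(* Each of $\mathtt{CA}$, $\mathtt{SUR}$ and $\mathtt{REV}$, with the topology induced by the metric $\delta$, is a perfect space, i.e. has no isolated points.
   Context: $\Sigma$ is a finite alphabet with $|\Sigma|\ge2$, $N(r)=[-r,r]$. A cellular automaton (CA) is a map $c:\Sigma^\mathbb{Z}\to\Sigma^\mathbb{Z}$ of the form $c(x)_i=F(x_{[i-r,i+r]})$ for a local function $F:\Sigma^{N(r)}\to\Sigma$. $\mathtt{CA}$ is the set of all CA, $\mathtt{SUR}$ the surjective and $\mathtt{REV}$ the injective ones. For $c,d\in\mathtt{CA}$ with common radius $r$, $D^c_d$ is the set of $w\in\Sigma^{N(r)}$ on which the local rules of $c$ and $d$ give different outputs, and $\delta(c,d)=|D^c_d|/|\Sigma|^{2r+1}$ (independent of $r$). *)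

theory Defs
  imports Complex_Main "HOL-Library.FuncSet"
begin

definition nbhd :: "nat \<Rightarrow> int set" where
  "nbhd r = {- int r .. int r}"

definition patterns :: "nat \<Rightarrow> (int \<Rightarrow> 'a) set" where
  "patterns r = PiE (nbhd r) (\<lambda>_. UNIV)"

definition has_local_rule :: "((int \<Rightarrow> 'a) \<Rightarrow> (int \<Rightarrow> 'a)) \<Rightarrow> nat \<Rightarrow> ((int \<Rightarrow> 'a) \<Rightarrow> 'a) \<Rightarrow> bool" where
  "has_local_rule c r F \<longleftrightarrow> (\<forall>x i. c x i = F (restrict (\<lambda>j. x (i + j)) (nbhd r)))"

definition has_radius :: "((int \<Rightarrow> 'a) \<Rightarrow> (int \<Rightarrow> 'a)) \<Rightarrow> nat \<Rightarrow> bool" where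
  "has_radius c r \<longleftrightarrow> (\<exists>F. has_local_rule c r F)"

definition CA :: "((int \<Rightarrow> 'a) \<Rightarrow> (int \<Rightarrow> 'a)) set" where
  "CA = {c. \<exists>r. has_radius c r}"

definition SUR :: "((int \<Rightarrow> 'a) \<Rightarrow> (int \<Rightarrow> 'a)) set" where
  "SUR = {c \<in> CA. surj c}"

definition REV :: "((int \<Rightarrow> 'a) \<Rightarrow> (int \<Rightarrow> 'a)) set" where
  "REV = {c \<in> CA. inj c}"

text \<open>Local-rule output of c on a pattern w in Sigma^N(r) (for c of radius r):
 evaluate c at cell 0 of any configuration extending w; we use w itself.\<close>

definition disagree :: "((int \<Rightarrow> 'a) \<Rightarrow> (int \<Rightarrow> 'a)) \<Rightarrow> ((int \<Rightarrow> 'a) \<Rightarrow> (int \<Rightarrow> 'a)) \<Rightarrow> nat \<Rightarrow> (int \<Rightarrow> 'a) set" where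
  "disagree c d r = {w \<in> patterns r. c w 0 \<noteq> d w 0}"

definition common_radius :: "((int \<Rightarrow> 'a) \<Rightarrow> (int \<Rightarrow> 'a)) \<Rightarrow> ((int \<Rightarrow> 'a) \<Rightarrow> (int \<Rightarrow> 'a)) \<Rightarrow> nat" where
  "common_radius c d = (LEAST r. has_radius c r \<and> has_radius d r)"

definition delta :: "((int \<Rightarrow> 'a::finite) \<Rightarrow> (int \<Rightarrow> 'a)) \<Rightarrow> ((int \<Rightarrow> 'a) \<Rightarrow> (int \<Rightarrow> 'a)) \<Rightarrow> real" where
  "delta c d = (let r = common_radius c d in
     real (card (disagree c d r)) / real (card (UNIV :: 'a set)) ^ (2 * r + 1))"

definition perfect_delta :: "((int \<Rightarrow> 'a::finite) \<Rightarrow> (int \<Rightarrow> 'a)) set \<Rightarrow> bool" where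
  "perfect_delta X \<longleftrightarrow> (\<forall>c\<in>X. \<forall>\<epsilon>>0. \<exists>d\<in>X. d \<noteq> c \<and> delta c d < \<epsilon>)"

end

theory Submission
  imports Defs "HOL-Library.Cardinality"
begin

(* delta c d is the proportion of windows of the least common radius on which the local
   rules of c and d disagree.  Enlarging the radius does not decrease this proportion, so
   delta c d is bounded by the proportion at any larger common radius N; if at radius N
   every disagreeing window contains a fixed pattern of size s at one of k possible places,
   then delta c d <= k / |Sigma|^s.

   For CA we change c only on the all-a0 window of a large radius.  For SUR and REV we
   compose c with a bijective CA g: near every occurrence of a long self-avoiding marker
   surrounding a block u or u' (of the radius r of c, with c u 0 ~= c u' 0), g swaps u and u'.
   Marker occurrences are far apart and g preserves them, so g is an involution; hence c o g
   stays surjective resp. injective, differs from c, and disagrees with c only on windows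
   containing the marker, which has arbitrarily small density. *)

section \<open>Locality\<close>

text \<open>A map is local of radius r if it commutes with shifts and its value at cell 0 only
  depends on the window nbhd r.  This is a rule-free description of having radius r.\<close>

definition is_local :: "((int \<Rightarrow> 'a) \<Rightarrow> (int \<Rightarrow> 'a)) \<Rightarrow> nat \<Rightarrow> bool" where
  "is_local c r \<longleftrightarrow> (\<forall>x i. c x i = c (\<lambda>j. x (i + j)) 0) \<and>
                   (\<forall>x x'. (\<forall>j\<in>nbhd r. x j = x' j) \<longrightarrow> c x 0 = c x' 0)"

lemma local_shift: "is_local c r \<Longrightarrow> c x i = c (\<lambda>j. x (i + j)) 0"
  unfolding is_local_def by blast

lemma local_cong: "is_local c r \<Longrightarrow> (\<And>j. j \<in> nbhd r \<Longrightarrow> x j = x' j) \<Longrightarrow> c x 0 = c x' 0"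
  unfolding is_local_def by blast

lemma mem_nbhd: "m \<in> nbhd r \<longleftrightarrow> \<bar>m\<bar> \<le> int r"
  unfolding nbhd_def by auto

lemma nbhd_mono: "r \<le> r' \<Longrightarrow> nbhd r \<subseteq> nbhd r'"
  unfolding nbhd_def by auto

lemma finite_nbhd [simp]: "finite (nbhd r)"
  unfolding nbhd_def by simp

lemma card_nbhd: "card (nbhd r) = 2 * r + 1"
  unfolding nbhd_def by simp

lemma has_radius_iff_local: "has_radius c r \<longleftrightarrow> is_local c r"
proof
  assume "has_radius c r"
  then obtain F where F: "\<And>x i. c x i = F (restrict (\<lambda>j. x (i + j)) (nbhd r))"
    unfolding has_radius_def has_local_rule_def by blast
  have "c x 0 = c x' 0" if "\<forall>j\<in>nbhd r. x j = x' j" for x x'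
  proof -
    have "restrict (\<lambda>j. x (0 + j)) (nbhd r) = restrict (\<lambda>j. x' (0 + j)) (nbhd r)"
      using that by (intro restrict_ext) auto
    then show ?thesis using F[of x 0] F[of x' 0] by simp
  qed
  moreover have "c x i = c (\<lambda>j. x (i + j)) 0" for x i
    using F[of x i] F[of "\<lambda>j. x (i + j)" 0] by simp
  ultimately show "is_local c r" unfolding is_local_def by blast
next
  assume L: "is_local c r"
  have "c x i = c (restrict (\<lambda>j. x (i + j)) (nbhd r)) 0" for x i
  proof -
    have "c (\<lambda>j. x (i + j)) 0 = c (restrict (\<lambda>j. x (i + j)) (nbhd r)) 0"
      by (rule local_cong[OF L]) simp
    then show ?thesis using local_shift[OF L, of x i] by simp
  qed
  then have "has_local_rule c r (\<lambda>w. c w 0)" unfolding has_local_rule_def by blast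
  then show "has_radius c r" unfolding has_radius_def by blast
qed

lemma CA_iff_local: "c \<in> CA \<longleftrightarrow> (\<exists>r. is_local c r)"
  unfolding CA_def using has_radius_iff_local by blast

lemma local_mono: "is_local c r \<Longrightarrow> r \<le> r' \<Longrightarrow> is_local c r'"
  unfolding is_local_def using nbhd_mono by blast

lemma local_comp:
  assumes c: "is_local c r" and g: "is_local g s"
  shows "is_local (c \<circ> g) (r + s)"
  unfolding is_local_def
proof (intro conjI allI impI)
  fix x i
  have "g x (i + j) = g (\<lambda>j. x (i + j)) j" for j
  proof -
    have "g x (i + j) = g (\<lambda>l. x (i + j + l)) 0" by (rule local_shift[OF g])
    also have "\<dots> = g (\<lambda>j. x (i + j)) j"
      using local_shift[OF g, of "\<lambda>j. x (i + j)" j] by (simp add: add.assoc)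
    finally show ?thesis .
  qed
  then have "(\<lambda>j. g x (i + j)) = g (\<lambda>j. x (i + j))" by blast
  then show "(c \<circ> g) x i = (c \<circ> g) (\<lambda>j. x (i + j)) 0"
    using local_shift[OF c, of "g x" i] by simp
next
  fix x x' :: "int \<Rightarrow> 'a" assume agree: "\<forall>j\<in>nbhd (r + s). x j = x' j"
  have "g x j = g x' j" if j: "j \<in> nbhd r" for j
  proof -
    have "g x j = g (\<lambda>l. x (j + l)) 0" by (rule local_shift[OF g])
    also have "\<dots> = g (\<lambda>l. x' (j + l)) 0"
    proof (rule local_cong[OF g])
      fix l assume "l \<in> nbhd s"
      then have "j + l \<in> nbhd (r + s)" using j by (simp add: mem_nbhd)
      then show "x (j + l) = x' (j + l)" using agree by blast
    qed
    also have "\<dots> = g x' j" by (rule local_shift[OF g, symmetric])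
    finally show ?thesis .
  qed
  then show "(c \<circ> g) x 0 = (c \<circ> g) x' 0"
    unfolding comp_def by (rule local_cong[OF c])
qed

lemma common_radius_local:
  assumes "is_local c r" "is_local d r"
  shows "is_local c (common_radius c d) \<and> is_local d (common_radius c d) \<and> common_radius c d \<le> r"
proof -
  have ex: "has_radius c r \<and> has_radius d r"
    using assms by (simp add: has_radius_iff_local)
  show ?thesis unfolding common_radius_def
    using LeastI[of "\<lambda>r. has_radius c r \<and> has_radius d r", OF ex]
      Least_le[of "\<lambda>r. has_radius c r \<and> has_radius d r", OF ex]
    by (simp add: has_radius_iff_local)
qed

section \<open>Counting disagreements\<close>

lemma finite_patterns [simp]: "finite (patterns r :: (int \<Rightarrow> 'a::finite) set)"
  unfolding patterns_def by (simp add: finite_PiE)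

lemma pattern_undefined: "w \<in> patterns r \<Longrightarrow> k \<notin> nbhd r \<Longrightarrow> w k = undefined"
  unfolding patterns_def by (rule PiE_arb)

lemma pattern_ext:
  "w \<in> patterns r \<Longrightarrow> w' \<in> patterns r \<Longrightarrow> (\<And>k. k \<in> nbhd r \<Longrightarrow> w k = w' k) \<Longrightarrow> w = w'"
  unfolding patterns_def by (rule PiE_ext)

lemma restrict_in_patterns: "restrict x (nbhd r) \<in> patterns r"
  unfolding patterns_def by (simp add: restrict_PiE_iff)

lemma card_patterns_agreeing:
  fixes f :: "int \<Rightarrow> 'a::finite"
  assumes S: "S \<subseteq> nbhd N"
  shows "card {w \<in> patterns N. \<forall>k\<in>S. w k = f k} * CARD('a) ^ card S \<le> CARD('a) ^ (2 * N + 1)"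
proof -
  let ?A = "{w \<in> patterns N. \<forall>k\<in>S. w k = f k}"
  let ?B = "PiE (nbhd N - S) (\<lambda>_. UNIV :: 'a set)"
  have "inj_on (\<lambda>w. restrict w (nbhd N - S)) ?A"
  proof (rule inj_onI)
    fix w w' assume w: "w \<in> ?A" and w': "w' \<in> ?A"
      and eq: "restrict w (nbhd N - S) = restrict w' (nbhd N - S)"
    have "w k = w' k" if "k \<in> nbhd N" for k
      using w w' that fun_cong[OF eq, of k] by (cases "k \<in> S") auto
    then show "w = w'" using w w' by (intro pattern_ext) auto
  qed
  moreover have "(\<lambda>w. restrict w (nbhd N - S)) ` ?A \<subseteq> ?B"
    by (rule image_subsetI) (simp only: restrict_PiE_iff, simp)
  ultimately have "card ?A \<le> card ?B"
    by (intro card_inj_on_le) (auto simp: finite_PiE)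
  also have "card ?B = CARD('a) ^ (2 * N + 1 - card S)"
    using S by (simp add: card_PiE card_Diff_subset finite_subset card_nbhd)
  finally have "card ?A * CARD('a) ^ card S \<le> CARD('a) ^ (2 * N + 1 - card S) * CARD('a) ^ card S"
    by simp
  also have "\<dots> = CARD('a) ^ (2 * N + 1)"
    using card_mono[OF finite_nbhd S] by (simp add: card_nbhd flip: power_add)
  finally show ?thesis .
qed

text \<open>Each disagreeing window of radius r extends in every way to one of radius N:
  the density of disagreements does not decrease when the radius grows.\<close>

lemma card_disagree_extend:
  fixes c d :: "(int \<Rightarrow> 'a::finite) \<Rightarrow> (int \<Rightarrow> 'a)"
  assumes c: "is_local c r" and d: "is_local d r" and rN: "r \<le> N"
  shows "card (disagree c d r) * CARD('a) ^ (2 * N - 2 * r) \<le> card (disagree c d N)"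
proof -
  let ?B = "PiE (nbhd N - nbhd r) (\<lambda>_. UNIV :: 'a set)"
  define merge where "merge = (\<lambda>(w, v) (k::int). if k \<in> nbhd r then w k else v k :: 'a)"
  have sub: "nbhd r \<subseteq> nbhd N" using rN by (rule nbhd_mono)
  have "inj_on merge (disagree c d r \<times> ?B)"
  proof (rule inj_onI)
    fix z z' assume z: "z \<in> disagree c d r \<times> ?B" and z': "z' \<in> disagree c d r \<times> ?B"
      and eq: "merge z = merge z'"
    obtain w v w' v' where zs: "z = (w, v)" "z' = (w', v')" by fastforce
    have agree: "(if k \<in> nbhd r then w k else v k) = (if k \<in> nbhd r then w' k else v' k)" for k
      using fun_cong[OF eq, of k] unfolding zs merge_def by simp
    have "w k = w' k" if "k \<in> nbhd r" for k using agree[of k] that by simp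
    moreover have "v k = v' k" if "k \<in> nbhd N - nbhd r" for k using agree[of k] that by simp
    ultimately have "w = w'" "v = v'"
      using z z' unfolding zs
      by (auto intro!: pattern_ext[of w r w'] PiE_ext[of v "nbhd N - nbhd r" _ v'] simp: disagree_def)
    then show "z = z'" unfolding zs by simp
  qed
  moreover have "merge ` (disagree c d r \<times> ?B) \<subseteq> disagree c d N"
  proof clarify
    fix w v assume w: "w \<in> disagree c d r" and v: "v \<in> ?B"
    have "merge (w, v) \<in> patterns N"
      unfolding patterns_def merge_def using sub PiE_arb[OF v] by (auto intro!: PiE_I)
    moreover have "c (merge (w, v)) 0 = c w 0" "d (merge (w, v)) 0 = d w 0"
      by (auto intro!: local_cong[OF c] local_cong[OF d] simp: merge_def)
    ultimately show "merge (w, v) \<in> disagree c d N" using w by (simp add: disagree_def)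
  qed
  moreover have "finite (disagree c d N)" unfolding disagree_def by simp
  ultimately have "card (disagree c d r \<times> ?B) \<le> card (disagree c d N)"
    by (rule card_inj_on_le)
  moreover have "card ?B = CARD('a) ^ (2 * N - 2 * r)"
    using sub by (simp add: card_PiE card_Diff_subset card_nbhd)
  ultimately show ?thesis by (simp add: card_cartesian_product)
qed

lemma delta_le_density:
  fixes c d :: "(int \<Rightarrow> 'a::finite) \<Rightarrow> (int \<Rightarrow> 'a)"
  assumes "is_local c N" "is_local d N"
  shows "delta c d \<le> card (disagree c d N) / real CARD('a) ^ (2 * N + 1)"
proof -
  define r where "r = common_radius c d"
  have r: "is_local c r" "is_local d r" "r \<le> N"
    using common_radius_local[OF assms] unfolding r_def by auto
  let ?q = "real CARD('a)"
  have "real (card (disagree c d r)) * ?q ^ (2 * N - 2 * r) \<le> card (disagree c d N)"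
    using card_disagree_extend[OF r] by (metis of_nat_le_iff of_nat_mult of_nat_power)
  moreover have "?q ^ (2 * N + 1) = ?q ^ (2 * r + 1) * ?q ^ (2 * N - 2 * r)"
    using r(3) by (simp flip: power_add)
  ultimately have "card (disagree c d r) / ?q ^ (2 * r + 1) \<le> card (disagree c d N) / ?q ^ (2 * N + 1)"
    by (simp add: field_simps)
  then show ?thesis unfolding delta_def Let_def r_def .
qed

lemma card_disagree_covered:
  fixes c d :: "(int \<Rightarrow> 'a::finite) \<Rightarrow> (int \<Rightarrow> 'a)" and p :: "int \<Rightarrow> 'a"
  assumes I: "finite I" and inside: "\<And>i m. i \<in> I \<Longrightarrow> m \<in> S \<Longrightarrow> i + m \<in> nbhd N"
    and covered: "\<And>w. w \<in> disagree c d N \<Longrightarrow> \<exists>i\<in>I. \<forall>m\<in>S. w (i + m) = p m"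
  shows "card (disagree c d N) * CARD('a) ^ card S \<le> card I * CARD('a) ^ (2 * N + 1)"
proof -
  define A where "A i = {w \<in> patterns N. \<forall>k\<in>(+) i ` S. w k = p (k - i)}" for i
  have each: "card (A i) * CARD('a) ^ card S \<le> CARD('a) ^ (2 * N + 1)" if "i \<in> I" for i
    using card_patterns_agreeing[of "(+) i ` S" N "\<lambda>k. p (k - i)"] inside[OF that]
    by (auto simp: A_def card_image)
  have "disagree c d N \<subseteq> (\<Union>i\<in>I. A i)"
    using covered by (fastforce simp: A_def disagree_def)
  then have "card (disagree c d N) \<le> card (\<Union>i\<in>I. A i)"
    using I by (intro card_mono) (auto simp: A_def)
  also have "\<dots> \<le> (\<Sum>i\<in>I. card (A i))"
    using I by (rule card_UN_le)
  finally have "card (disagree c d N) * CARD('a) ^ card S \<le> (\<Sum>i\<in>I. card (A i) * CARD('a) ^ card S)"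
    by (simp add: sum_distrib_right[symmetric])
  also have "\<dots> \<le> card I * CARD('a) ^ (2 * N + 1)"
    using sum_mono[OF each] by simp
  finally show ?thesis .
qed

lemma delta_bound:
  fixes c d :: "(int \<Rightarrow> 'a::finite) \<Rightarrow> (int \<Rightarrow> 'a)" and p :: "int \<Rightarrow> 'a"
  assumes c: "is_local c N" and d: "is_local d N"
    and I: "finite I" and inside: "\<And>i m. i \<in> I \<Longrightarrow> m \<in> S \<Longrightarrow> i + m \<in> nbhd N"
    and covered: "\<And>w. w \<in> disagree c d N \<Longrightarrow> \<exists>i\<in>I. \<forall>m\<in>S. w (i + m) = p m"
  shows "delta c d \<le> card I / real CARD('a) ^ card S"
proof -
  let ?q = "real CARD('a)"
  have "real (card (disagree c d N)) * ?q ^ card S \<le> card I * ?q ^ (2 * N + 1)"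
    using card_disagree_covered[OF I inside covered] by (metis of_nat_le_iff of_nat_mult of_nat_power)
  then have "card (disagree c d N) / ?q ^ (2 * N + 1) \<le> card I / ?q ^ card S"
    by (simp add: field_simps)
  then show ?thesis using delta_le_density[OF c d] by linarith
qed

lemma eventually_small:
  fixes A e :: real and q :: nat
  assumes "0 < e" and "2 \<le> q"
  shows "\<exists>k. \<forall>s\<ge>k. A / real q ^ s < e"
proof -
  have "(\<lambda>s. A / real q ^ s) \<longlonglongrightarrow> 0"
    by (rule LIMSEQ_divide_realpow_zero) (use assms in simp)
  then have "eventually (\<lambda>s. A / real q ^ s < e) sequentially"
    using assms(1) by (rule order_tendstoD)
  then show ?thesis by (simp add: eventually_sequentially)
qed

section \<open>Perturbing an arbitrary CA\<close>

lemma exists_other: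
  assumes "CARD('a::finite) \<ge> 2"
  shows "\<exists>v'::'a. v' \<noteq> v"
proof (rule ccontr)
  assume "\<not> (\<exists>v'::'a. v' \<noteq> v)"
  then have "(UNIV :: 'a set) = {v}" by auto
  then have "CARD('a) = card {v}" by (rule arg_cong)
  then show False using assms by simp
qed

text \<open>Changing the output of c on the constant window a0 of a large radius n gives a
  different CA at distance at most |Sigma|^-(2n+1).\<close>

lemma perturb_CA:
  fixes c :: "(int \<Rightarrow> 'a::finite) \<Rightarrow> (int \<Rightarrow> 'a)"
  assumes card2: "CARD('a) \<ge> 2" and c: "is_local c r" and e: "0 < \<epsilon>"
  shows "\<exists>d\<in>CA. d \<noteq> c \<and> delta c d < \<epsilon>"
proof -
  define other :: "'a \<Rightarrow> 'a" where "other v = (SOME v'. v' \<noteq> v)" for v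
  have other: "other v \<noteq> v" for v
    unfolding other_def using someI_ex[OF exists_other[OF card2, of v]] .
  obtain k where k: "\<forall>s\<ge>k. 1 / real CARD('a) ^ s < \<epsilon>"
    using eventually_small[OF e card2] by blast
  define n where "n = r + k"
  fix a0 :: 'a
  define d where "d x i = (if \<forall>j\<in>nbhd n. x (i + j) = a0 then other (c x i) else c x i)" for x i
  have c_n: "is_local c n" using c by (rule local_mono) (simp add: n_def)
  have d_n: "is_local d n" unfolding is_local_def
  proof (intro conjI allI impI)
    fix x i show "d x i = d (\<lambda>j. x (i + j)) 0"
      unfolding d_def using local_shift[OF c, of x i] by simp
  next
    fix x x' :: "int \<Rightarrow> 'a" assume agree: "\<forall>j\<in>nbhd n. x j = x' j"
    then have "c x 0 = c x' 0" by (intro local_cong[OF c_n]) simp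
    with agree show "d x 0 = d x' 0" unfolding d_def by simp
  qed
  have "d \<noteq> c"
  proof
    assume "d = c"
    then have "d (\<lambda>_. a0) 0 = c (\<lambda>_. a0) 0" by simp
    then show False using other unfolding d_def by simp
  qed
  moreover have "delta c d \<le> card {0::int} / real CARD('a) ^ card (nbhd n)"
  proof (rule delta_bound[OF c_n d_n, of "{0}" "nbhd n" "\<lambda>_. a0"])
    fix w assume "w \<in> disagree c d n"
    then show "\<exists>i\<in>{0}. \<forall>m\<in>nbhd n. w (i + m) = a0"
      unfolding disagree_def d_def by (auto split: if_splits)
  qed simp_all
  moreover have "1 / real CARD('a) ^ card (nbhd n) < \<epsilon>"
  proof -
    have "k \<le> card (nbhd n)" by (simp add: card_nbhd n_def)
    then show ?thesis using k by blast
  qed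
  ultimately show ?thesis using d_n by (force simp: CA_iff_local)
qed

section \<open>A bijective perturbation\<close>

lemma nonconstant_patterns:
  fixes c :: "(int \<Rightarrow> 'a) \<Rightarrow> (int \<Rightarrow> 'a)"
  assumes c: "is_local c r" and nonconst: "\<And>v. \<exists>x. c x \<noteq> (\<lambda>_. v)"
  shows "\<exists>u\<in>patterns r. \<exists>u'\<in>patterns r. c u 0 \<noteq> c u' 0"
proof (rule ccontr)
  assume "\<not> ?thesis"
  then have const: "c w 0 = c w' 0" if "w \<in> patterns r" "w' \<in> patterns r" for w w'
    using that by blast
  define w0 :: "int \<Rightarrow> 'a" where "w0 = restrict (\<lambda>_. undefined) (nbhd r)"
  have "c x i = c w0 0" for x i
  proof -
    have "c x i = c (\<lambda>j. x (i + j)) 0" by (rule local_shift[OF c])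
    also have "\<dots> = c (restrict (\<lambda>j. x (i + j)) (nbhd r)) 0" by (rule local_cong[OF c]) simp
    also have "\<dots> = c w0 0" unfolding w0_def by (intro const restrict_in_patterns)
    finally show ?thesis .
  qed
  then show False using nonconst by blast
qed

text \<open>A site is a position t where the
  marker occurs and the central block of radius r is u or u'; g swaps u and u' at every site.\<close>

locale block_swap =
  fixes r n :: nat and a0 a1 :: "'a::finite" and u u' :: "int \<Rightarrow> 'a"
  assumes n_large: "3 * r + 2 \<le> n" and a01: "a0 \<noteq> a1" and u_ne: "u \<noteq> u'"
    and u_pat: "u \<in> patterns r" and u'_pat: "u' \<in> patterns r"
begin

definition frame :: "int set" where
  "frame = nbhd n - nbhd r"

definition marker :: "int \<Rightarrow> 'a" where
  "marker m = (if m < 0 \<or> m = int n then a1 else a0)"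

definition marked :: "(int \<Rightarrow> 'a) \<Rightarrow> int \<Rightarrow> bool" where
  "marked x t \<longleftrightarrow> (\<forall>m\<in>frame. x (t + m) = marker m)"

definition block :: "(int \<Rightarrow> 'a) \<Rightarrow> int \<Rightarrow> (int \<Rightarrow> 'a)" where
  "block x t = restrict (\<lambda>j. x (t + j)) (nbhd r)"

definition site :: "(int \<Rightarrow> 'a) \<Rightarrow> int \<Rightarrow> bool" where
  "site x t \<longleftrightarrow> marked x t \<and> (block x t = u \<or> block x t = u')"

definition swap :: "(int \<Rightarrow> 'a) \<Rightarrow> (int \<Rightarrow> 'a)" where
  "swap v = (if v = u then u' else u)"

definition swap_rule :: "(int \<Rightarrow> 'a) \<Rightarrow> 'a" where
  "swap_rule y = (if \<exists>i\<in>nbhd r. site y i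
     then let i = (SOME i. i \<in> nbhd r \<and> site y i) in swap (block y i) (- i)
     else y 0)"

definition g :: "(int \<Rightarrow> 'a) \<Rightarrow> (int \<Rightarrow> 'a)" where
  "g x l = swap_rule (\<lambda>j. x (l + j))"

lemma mem_frame: "m \<in> frame \<longleftrightarrow> int r < \<bar>m\<bar> \<and> \<bar>m\<bar> \<le> int n"
  unfolding frame_def by (auto simp: mem_nbhd)

lemma card_frame: "card frame = 2 * n - 2 * r"
proof -
  have "nbhd r \<subseteq> nbhd n" using n_large by (intro nbhd_mono) simp
  then show ?thesis unfolding frame_def by (simp add: card_Diff_subset card_nbhd)
qed

lemma marker_mismatch:
  assumes "\<delta> \<noteq> 0" "\<bar>\<delta>\<bar> \<le> int n + int r"
  shows "\<exists>m\<in>frame. m + \<delta> \<in> frame \<and> marker m \<noteq> marker (m + \<delta>)"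
proof -
  have nb: "3 * int r + 2 \<le> int n" using n_large by linarith
  consider (A) "0 < \<delta>" "\<delta> \<le> int n - int r - 1" | (B) "0 < \<delta>" "int n - int r \<le> \<delta>"
    | (C) "\<delta> < 0" "- (int n - int r - 1) \<le> \<delta>" | (D) "\<delta> < 0" "\<delta> \<le> - (int n - int r)"
    using assms by linarith
  then show ?thesis
  proof cases
    case A
    show ?thesis
      by (rule bexI[where x="int n - \<delta>"]) (use A nb assms a01 in \<open>auto simp: mem_frame marker_def\<close>)
  next
    case B
    show ?thesis
      by (rule bexI[where x="- int r - 1"]) (use B nb assms a01 in \<open>auto simp: mem_frame marker_def\<close>)
  next
    case C
    show ?thesis
      by (rule bexI[where x="int n"]) (use C nb assms a01 in \<open>auto simp: mem_frame marker_def\<close>)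
  next
    case D
    show ?thesis
      by (rule bexI[where x="int r + 1"]) (use D nb assms a01 in \<open>auto simp: mem_frame marker_def\<close>)
  qed
qed

lemma marked_unique:
  assumes "marked x t" "marked x t'" "\<bar>t - t'\<bar> \<le> int n + int r"
  shows "t = t'"
proof (rule ccontr)
  assume "t \<noteq> t'"
  then obtain m where m: "m \<in> frame" "m + (t - t') \<in> frame" "marker m \<noteq> marker (m + (t - t'))"
    using marker_mismatch[of "t - t'"] assms(3) by auto
  have "x (t + m) = marker m" using assms(1) m(1) unfolding marked_def by blast
  moreover have "x (t' + (m + (t - t'))) = marker (m + (t - t'))"
    using assms(2) m(2) unfolding marked_def by blast
  moreover have "t' + (m + (t - t')) = t + m" by simp
  ultimately show False using m(3) by simp
qed

lemma site_shift: "site (\<lambda>j. x (l + j)) i = site x (l + i)"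
  unfolding site_def marked_def block_def by (simp add: add.assoc)

lemma block_shift: "block (\<lambda>j. x (l + j)) i = block x (l + i)"
  unfolding block_def by (simp add: add.assoc)

lemma g_near_site:
  assumes t: "site x t" and near: "\<bar>l - t\<bar> \<le> int r"
  shows "g x l = swap (block x t) (l - t)"
proof -
  let ?y = "\<lambda>j. x (l + j)"
  define i where "i = (SOME i. i \<in> nbhd r \<and> site ?y i)"
  have ex: "t - l \<in> nbhd r \<and> site ?y (t - l)"
    using t near by (simp add: site_shift mem_nbhd)
  then have i: "i \<in> nbhd r \<and> site ?y i" unfolding i_def by (rule someI)
  then have "site x (l + i)" by (simp add: site_shift)
  then have "l + i = t"
    using t i near n_large by (intro marked_unique[of x]) (auto simp: site_def mem_nbhd)
  moreover have "g x l = swap (block x (l + i)) (- i)"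
    using ex unfolding g_def swap_rule_def i_def[symmetric] by (auto simp: block_shift)
  ultimately show ?thesis by (metis add_diff_cancel_left' minus_diff_eq)
qed

lemma g_away:
  assumes "\<not> (\<exists>t. \<bar>l - t\<bar> \<le> int r \<and> site x t)"
  shows "g x l = x l"
proof -
  have "\<not> (\<exists>i\<in>nbhd r. site (\<lambda>j. x (l + j)) i)"
    using assms by (auto simp: site_shift mem_nbhd)
  then show ?thesis unfolding g_def swap_rule_def by simp
qed

lemma swap_cases: "swap v = u \<or> swap v = u'"
  unfolding swap_def by auto

lemma swap_swap: "v = u \<or> v = u' \<Longrightarrow> swap (swap v) = v"
  unfolding swap_def using u_ne by auto

lemma swap_pattern: "swap v \<in> patterns r"
  using swap_cases u_pat u'_pat by metis

text \<open>g leaves the frame of a site untouched and swaps its block, so sites are preserved.\<close>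

lemma g_frame:
  assumes t: "site x t" and m: "m \<in> frame"
  shows "g x (t + m) = x (t + m)"
proof (rule g_away, rule notI)
  assume "\<exists>t'. \<bar>t + m - t'\<bar> \<le> int r \<and> site x t'"
  then obtain t' where t': "\<bar>t + m - t'\<bar> \<le> int r" "site x t'" by blast
  have "\<bar>t - t'\<bar> \<le> int n + int r" using t'(1) m[unfolded mem_frame] by linarith
  then have "t = t'" using t t'(2) by (intro marked_unique[of x]) (auto simp: site_def)
  then show False using t'(1) m[unfolded mem_frame] by linarith
qed

lemma block_g:
  assumes t: "site x t"
  shows "block (g x) t = swap (block x t)"
proof
  fix j show "block (g x) t j = swap (block x t) j"
  proof (cases "j \<in> nbhd r")
    case True
    then have "g x (t + j) = swap (block x t) (t + j - t)"
      by (intro g_near_site[OF t]) (simp add: mem_nbhd)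
    then show ?thesis using True unfolding block_def by simp
  next
    case False
    then show ?thesis unfolding block_def using pattern_undefined[OF swap_pattern False] by simp
  qed
qed

lemma site_g: "site x t \<Longrightarrow> site (g x) t"
  using g_frame block_g swap_cases unfolding site_def marked_def by metis

text \<open>Conversely g creates no new sites: away from the sites of x, g x equals x.\<close>

lemma site_g_rev:
  assumes t: "site (g x) t"
  shows "site x t"
proof (rule ccontr)
  assume not_site: "\<not> site x t"
  have unchanged: "g x l = x l" if "\<bar>l - t\<bar> \<le> int n" for l
  proof (rule ccontr)
    assume "g x l \<noteq> x l"
    then obtain t' where t': "\<bar>l - t'\<bar> \<le> int r" "site x t'" using g_away by blast
    then have "t = t'" using site_g[OF t'(2)] t that
      by (intro marked_unique[of "g x"]) (auto simp: site_def)
    then show False using not_site t'(2) by simp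
  qed
  have "marked x t" unfolding marked_def
  proof
    fix m assume m: "m \<in> frame"
    have "g x (t + m) = marker m" using t m unfolding site_def marked_def by blast
    then show "x (t + m) = marker m" using unchanged[of "t + m"] m[unfolded mem_frame] by simp
  qed
  moreover have "block x t = block (g x) t"
    unfolding block_def by (rule restrict_ext) (use unchanged n_large in \<open>auto simp: mem_nbhd\<close>)
  ultimately show False using not_site t unfolding site_def by simp
qed

lemma g_involution: "g (g x) = x"
proof
  fix l
  show "g (g x) l = x l"
  proof (cases "\<exists>t. \<bar>l - t\<bar> \<le> int r \<and> site x t")
    case True
    then obtain t where t: "\<bar>l - t\<bar> \<le> int r" "site x t" by blast
    have "g (g x) l = swap (block (g x) t) (l - t)" by (rule g_near_site[OF site_g[OF t(2)] t(1)])
    also have "\<dots> = block x t (l - t)" using block_g[OF t(2)] swap_swap t(2) unfolding site_def by simp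
    also have "\<dots> = x l" unfolding block_def using t(1) by (simp add: mem_nbhd)
    finally show ?thesis .
  next
    case False
    then have "\<not> (\<exists>t. \<bar>l - t\<bar> \<le> int r \<and> site (g x) t)" using site_g_rev by blast
    then have "g (g x) l = g x l" by (rule g_away)
    also have "\<dots> = x l" using False by (rule g_away)
    finally show ?thesis .
  qed
qed

lemma site_block_cong:
  assumes agree: "\<forall>j\<in>nbhd (n + r). x j = x' j" and i: "i \<in> nbhd r"
  shows "site x i = site x' i \<and> block x i = block x' i"
proof -
  have eq: "x (i + j) = x' (i + j)" if "\<bar>j\<bar> \<le> int n" for j
    using agree i that abs_triangle_ineq[of i j] by (simp add: mem_nbhd)
  then have "marked x i = marked x' i" unfolding marked_def by (simp add: mem_frame)
  moreover have "block x i = block x' i"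
    unfolding block_def using eq n_large by (intro restrict_ext) (simp add: mem_nbhd)
  ultimately show ?thesis unfolding site_def by simp
qed

lemma local_g: "is_local g (n + r)"
  unfolding is_local_def
proof (intro conjI allI impI)
  fix x i show "g x i = g (\<lambda>j. x (i + j)) 0" unfolding g_def by simp
next
  fix x x' :: "int \<Rightarrow> 'a" assume agree: "\<forall>j\<in>nbhd (n + r). x j = x' j"
  note cong = site_block_cong[OF agree]
  have same_sites: "(\<lambda>i. i \<in> nbhd r \<and> site x i) = (\<lambda>i. i \<in> nbhd r \<and> site x' i)"
    using cong by auto
  have "swap_rule x = swap_rule x'"
  proof (cases "\<exists>i\<in>nbhd r. site x i")
    case True
    define i where "i = (SOME i. i \<in> nbhd r \<and> site x i)"
    have "i \<in> nbhd r" unfolding i_def using someI_ex[of "\<lambda>i. i \<in> nbhd r \<and> site x i"] True by blast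
    moreover have "i = (SOME i. i \<in> nbhd r \<and> site x' i)" unfolding i_def same_sites ..
    ultimately show ?thesis unfolding swap_rule_def using True cong i_def by auto
  next
    case False
    moreover have "x 0 = x' 0" using agree by (auto simp: mem_nbhd)
    ultimately show ?thesis unfolding swap_rule_def using cong by auto
  qed
  then show "g x 0 = g x' 0" unfolding g_def by simp
qed

lemma exists_site: "\<exists>x. site x 0 \<and> block x 0 = u"
proof -
  define x where "x = (\<lambda>j. if j \<in> nbhd r then u j else marker j)"
  have "block x 0 = u"
  proof
    fix j show "block x 0 j = u j"
      unfolding block_def x_def using pattern_undefined[OF u_pat, of j] by auto
  qed
  moreover have "marked x 0" unfolding marked_def x_def frame_def by auto
  ultimately show ?thesis unfolding site_def by blast
qed

text \<open>Since c u 0 ~= c u' 0, composing with g changes c (test it on a site with block u).\<close>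

lemma comp_g_differs:
  assumes c: "is_local c r" and neq: "c u 0 \<noteq> c u' 0"
  shows "c \<circ> g \<noteq> c"
proof -
  obtain x where x: "site x 0" "block x 0 = u" using exists_site by blast
  have "c (g x) 0 = c u' 0"
  proof (rule local_cong[OF c])
    fix j assume "j \<in> nbhd r"
    then show "g x j = u' j"
      using g_near_site[OF x(1), of j] x(2) by (simp add: mem_nbhd swap_def)
  qed
  moreover have "c x 0 = c u 0"
    by (rule local_cong[OF c]) (simp add: x(2)[symmetric] block_def)
  ultimately show ?thesis using neq by (metis comp_apply)
qed

lemma disagreement_near_marker:
  assumes c: "is_local c r" and ne: "c (g w) 0 \<noteq> c w 0"
  shows "\<exists>t\<in>nbhd (2 * r). marked w t"
proof (rule ccontr)
  assume no_marker: "\<not> (\<exists>t\<in>nbhd (2 * r). marked w t)"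
  have "g w j = w j" if "j \<in> nbhd r" for j
  proof (rule g_away, rule notI)
    assume "\<exists>t. \<bar>j - t\<bar> \<le> int r \<and> site w t"
    then obtain t where "\<bar>j - t\<bar> \<le> int r" "site w t" by blast
    then show False using no_marker that by (auto simp: mem_nbhd site_def)
  qed
  then have "c (g w) 0 = c w 0" by (rule local_cong[OF c])
  then show False using ne by simp
qed

lemma delta_comp_g:
  assumes c: "is_local c r"
  shows "delta c (c \<circ> g) \<le> real (4 * r + 1) / real CARD('a) ^ (2 * n - 2 * r)"
proof -
  have "delta c (c \<circ> g) \<le> card (nbhd (2 * r)) / real CARD('a) ^ card frame"
  proof (rule delta_bound[of c "n + 2 * r" "c \<circ> g" _ _ marker])
    show "is_local c (n + 2 * r)" using c by (rule local_mono) simp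
    show "is_local (c \<circ> g) (n + 2 * r)"
      using local_comp[OF c local_g] by (simp add: mult_2 add.commute add.left_commute)
    show "i + m \<in> nbhd (n + 2 * r)" if "i \<in> nbhd (2 * r)" "m \<in> frame" for i m
      using that by (auto simp: mem_nbhd mem_frame)
    show "\<exists>i\<in>nbhd (2 * r). \<forall>m\<in>frame. w (i + m) = marker m"
      if "w \<in> disagree c (c \<circ> g) (n + 2 * r)" for w
      using that disagreement_near_marker[OF c, of w] by (auto simp: disagree_def marked_def)
  qed simp
  then show ?thesis by (simp add: card_nbhd card_frame)
qed

end

lemma perturb_by_bijection:
  fixes c :: "(int \<Rightarrow> 'a::finite) \<Rightarrow> (int \<Rightarrow> 'a)"
  assumes card2: "CARD('a) \<ge> 2" and c: "is_local c r"
    and nonconst: "\<And>v. \<exists>x. c x \<noteq> (\<lambda>_. v)" and e: "0 < \<epsilon>"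
  shows "\<exists>g. bij g \<and> c \<circ> g \<in> CA \<and> c \<circ> g \<noteq> c \<and> delta c (c \<circ> g) < \<epsilon>"
proof -
  obtain u u' where u: "u \<in> patterns r" and u': "u' \<in> patterns r" and neq: "c u 0 \<noteq> c u' 0"
    using nonconstant_patterns[OF c nonconst] by blast
  obtain a0 a1 :: 'a where a01: "a0 \<noteq> a1" using exists_other[OF card2] by blast
  obtain k where k: "\<forall>s\<ge>k. real (4 * r + 1) / real CARD('a) ^ s < \<epsilon>"
    using eventually_small[OF e card2] by blast
  define n where "n = 3 * r + 2 + k"
  interpret B: block_swap r n a0 a1 u u'
    using a01 neq u u' by unfold_locales (auto simp: n_def)
  have "c \<circ> B.g \<in> CA"
    using local_comp[OF c B.local_g] by (auto simp: CA_iff_local)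
  moreover have "delta c (c \<circ> B.g) < \<epsilon>"
  proof -
    have "k \<le> 2 * n - 2 * r" by (simp add: n_def)
    then show ?thesis using B.delta_comp_g[OF c] k by fastforce
  qed
  moreover have "bij B.g" using B.g_involution by (rule involuntory_imp_bij)
  ultimately show ?thesis using B.comp_g_differs[OF c neq] by blast
qed

section \<open>Perfectness\<close>

lemma surj_nonconstant:
  assumes card2: "CARD('a::finite) \<ge> 2" and "surj (c :: 'b \<Rightarrow> (int \<Rightarrow> 'a))"
  shows "\<exists>x. c x \<noteq> (\<lambda>_. v)"
proof -
  obtain a where "a \<noteq> v" using exists_other[OF card2] by blast
  moreover obtain x where "c x = (\<lambda>_. a)" using \<open>surj c\<close> by (metis surjD)
  ultimately show ?thesis by metis
qed

lemma inj_nonconstant: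
  assumes card2: "CARD('a::finite) \<ge> 2" and "inj (c :: (int \<Rightarrow> 'a) \<Rightarrow> 'b)"
  shows "\<exists>x. c x \<noteq> v"
proof -
  obtain a b :: 'a where "a \<noteq> b" using exists_other[OF card2] by blast
  then have "c (\<lambda>_. a) \<noteq> c (\<lambda>_. b)" using \<open>inj c\<close> by (metis inj_eq)
  then show ?thesis by metis
qed

lemma perfect_CA:
  assumes "CARD('a::finite) \<ge> 2"
  shows "perfect_delta (CA :: ((int \<Rightarrow> 'a) \<Rightarrow> (int \<Rightarrow> 'a)) set)"
  unfolding perfect_delta_def using perturb_CA[OF assms] by (metis CA_iff_local)

lemma perfect_SUR:
  assumes card2: "CARD('a::finite) \<ge> 2"
  shows "perfect_delta (SUR :: ((int \<Rightarrow> 'a) \<Rightarrow> (int \<Rightarrow> 'a)) set)"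
  unfolding perfect_delta_def
proof (intro ballI allI impI)
  fix c :: "(int \<Rightarrow> 'a) \<Rightarrow> (int \<Rightarrow> 'a)" and \<epsilon> :: real
  assume "c \<in> SUR" and e: "0 < \<epsilon>"
  then obtain r where c: "is_local c r" and "surj c" by (auto simp: SUR_def CA_iff_local)
  then obtain g where g: "bij g" "c \<circ> g \<in> CA" "c \<circ> g \<noteq> c" "delta c (c \<circ> g) < \<epsilon>"
    using perturb_by_bijection[OF card2 c surj_nonconstant[OF card2] e] by blast
  have "surj (c \<circ> g)" using bij_is_surj[OF g(1)] \<open>surj c\<close> by (rule comp_surj)
  then show "\<exists>d\<in>SUR. d \<noteq> c \<and> delta c d < \<epsilon>" using g by (auto simp: SUR_def)
qed

lemma perfect_REV:
  assumes card2: "CARD('a::finite) \<ge> 2"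
  shows "perfect_delta (REV :: ((int \<Rightarrow> 'a) \<Rightarrow> (int \<Rightarrow> 'a)) set)"
  unfolding perfect_delta_def
proof (intro ballI allI impI)
  fix c :: "(int \<Rightarrow> 'a) \<Rightarrow> (int \<Rightarrow> 'a)" and \<epsilon> :: real
  assume "c \<in> REV" and e: "0 < \<epsilon>"
  then obtain r where c: "is_local c r" and "inj c" by (auto simp: REV_def CA_iff_local)
  then obtain g where g: "bij g" "c \<circ> g \<in> CA" "c \<circ> g \<noteq> c" "delta c (c \<circ> g) < \<epsilon>"
    using perturb_by_bijection[OF card2 c inj_nonconstant[OF card2] e] by blast
  have "inj (c \<circ> g)" using \<open>inj c\<close> bij_is_inj[OF g(1)] by (rule inj_compose)
  then show "\<exists>d\<in>REV. d \<noteq> c \<and> delta c d < \<epsilon>" using g by (auto simp: REV_def)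
qed

theorem mainTheorem7:
  assumes "card (UNIV :: 'a::finite set) \<ge> 2"
  shows "perfect_delta (CA :: ((int \<Rightarrow> 'a) \<Rightarrow> (int \<Rightarrow> 'a)) set)
       \<and> perfect_delta (SUR :: ((int \<Rightarrow> 'a) \<Rightarrow> (int \<Rightarrow> 'a)) set)
       \<and> perfect_delta (REV :: ((int \<Rightarrow> 'a) \<Rightarrow> (int \<Rightarrow> 'a)) set)"
  using perfect_CA[OF assms] perfect_SUR[OF assms] perfect_REV[OF assms] by blast

end
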